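(* Let $\mu>0$, $\sigma\ge0$, and let $A$ be the randomized single-item mechanism that posts price $\frac{1}{2}\mu$ with probability $\frac12$ and price $\mu+\frac{\sigma^2}{\mu}$ with probability $\frac12$. Then for every distribution $F$ supported on exactly two points, with mean $\mu$ and variance exactly $\sigma^2$, we have $\mathrm{REV}(A;F)\ge\frac14\,\mathrm{OPT}(F)$.
   Context: Single item, single buyer with nonnegative value $X\sim F$; the buyer buys iff $X$ is at least the posted price. $\mathrm{REV}(p;F)=p\Pr[X\ge p]$, for a distribution $A$ over prices $\mathrm{REV}(A;F)=\mathbb{E}_{p\sim A}[\mathrm{REV}(p;F)]$, and $\mathrm{OPT}(F)=\sup_{p\ge0}\mathrm{REV}(p;F)$. *)

theory Defs
  imports "HOL-Probability.Probability"
begin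

definition REV :: "real \<Rightarrow> real pmf \<Rightarrow> real" where
  "REV p F = p * measure_pmf.prob F {x. x \<ge> p}"

definition REV_mech :: "real pmf \<Rightarrow> real pmf \<Rightarrow> real" where
  "REV_mech A F = measure_pmf.expectation A (\<lambda>p. REV p F)"

definition OPT :: "real pmf \<Rightarrow> real" where
  "OPT F = (SUP p\<in>{0..}. REV p F)"

definition mechA :: "real \<Rightarrow> real \<Rightarrow> real pmf" where
  "mechA \<mu> \<sigma> = map_pmf (\<lambda>b. if b then \<mu> / 2 else \<mu> + \<sigma>^2 / \<mu>) (bernoulli_pmf (1/2))"

end

theory Submission
  imports Defs
begin

text \<open>
  Let F put mass q on a and 1 - q on b > a, so that \<open>OPT F = max a ((1 - q) * b)\<close> and
  \<open>\<mu> = q * a + (1 - q) * b\<close>. The high price \<open>h = \<mu> + \<sigma>\<^sup>2 / \<mu> = E[X\<^sup>2] / \<mu>\<close> lies in \<open>(a, b]\<close>,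
  so it sells with probability 1 - q and \<open>\<mu> * REV h F = (1 - q) * E[X\<^sup>2] \<ge> ((1 - q) * b)\<^sup>2\<close>.
  If \<open>\<mu> / 2 \<le> a\<close>, the low price sells surely and earns \<open>\<mu> / 2\<close>, while both a and \<open>(1 - q) * b\<close>
  are at most \<open>\<mu>\<close>. Otherwise \<open>(1 - q) * b = \<mu> - q * a > \<mu> / 2 > a\<close> is the optimum and
  \<open>REV h F \<ge> ((1 - q) * b)\<^sup>2 / \<mu> \<ge> (1 - q) * b / 2\<close>. Either way one of the two equally likely
  prices earns half of the optimum.
\<close>

lemma card_2_linorderE:
  fixes A :: "'a::linorder set"
  assumes "card A = 2"
  obtains a b where "a < b" "A = {a, b}"
proof -
  obtain x y where "x \<noteq> y" "A = {x, y}" using assms by (auto simp: card_2_iff)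
  then show ?thesis using that[of x y] that[of y x] by (cases x y rule: linorder_cases) auto
qed

lemma pmf_two_point:
  assumes "set_pmf F = {a, b}" "a \<noteq> b"
  shows "pmf F b = 1 - pmf F a"
  using sum_pmf_eq_1[of "{a, b}" F] assms by simp

lemma expectation_two_point:
  fixes f :: "'a \<Rightarrow> real"
  assumes "set_pmf F = {a, b}" "a \<noteq> b"
  shows "measure_pmf.expectation F f = pmf F a * f a + (1 - pmf F a) * f b"
  using assms pmf_two_point[OF assms]
  by (subst integral_measure_pmf_real[of "{a, b}"]) auto

lemma prob_two_point:
  assumes "set_pmf F = {a, b}" "a \<noteq> b"
  shows "measure_pmf.prob F A = pmf F a * indicator A a + (1 - pmf F a) * indicator A b"
  using expectation_two_point[OF assms, of "indicator A"] by simp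

definition rev_curve :: "real \<Rightarrow> real \<Rightarrow> real \<Rightarrow> real \<Rightarrow> real" where
  "rev_curve a b q p = p * (if p \<le> a then 1 else if p \<le> b then 1 - q else 0)"

lemma REV_two_point:
  assumes "set_pmf F = {a, b}" "a < b"
  shows "REV p F = rev_curve a b (pmf F a) p"
  using assms unfolding REV_def rev_curve_def
  by (auto simp: prob_two_point indicator_def)

lemma two_point_second_moment:
  assumes "set_pmf F = {a, b}" "a \<noteq> b"
  shows "(measure_pmf.expectation F (\<lambda>x. x))\<^sup>2 + measure_pmf.variance F (\<lambda>x. x)
           = pmf F a * a\<^sup>2 + (1 - pmf F a) * b\<^sup>2"
  by (simp add: expectation_two_point[OF assms] power2_eq_square algebra_simps)

lemma rev_curve_le_max:
  assumes "0 \<le> a" "q \<le> 1"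
  shows "rev_curve a b q p \<le> max a ((1 - q) * b)"
  using assms mult_right_mono[of p b "1 - q"] unfolding rev_curve_def by (auto simp: mult.commute)

context
  fixes a b q \<mu> h :: real
  assumes a: "0 \<le> a" "a < b" and q: "0 < q" "q < 1"
    and mean: "\<mu> = q * a + (1 - q) * b"
    and second_moment: "h * \<mu> = q * a\<^sup>2 + (1 - q) * b\<^sup>2"
begin

lemma a_less_mean: "a < \<mu>"
proof -
  have "\<mu> - a = (1 - q) * (b - a)" using mean by (simp add: algebra_simps)
  moreover have "0 < (1 - q) * (b - a)" using a q by simp
  ultimately show ?thesis by simp
qed

lemma mean_pos: "0 < \<mu>"
  using a_less_mean a by linarith

lemma second_moment_price_bounds: "a < h" "h \<le> b"
proof -
  have "(h - a) * \<mu> = (1 - q) * b * (b - a)"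
    using second_moment by (simp add: mean power2_eq_square algebra_simps)
  also have "\<dots> > 0" using a q by simp
  finally show "a < h" using mean_pos by (simp add: zero_less_mult_iff)
  have "(b - h) * \<mu> = q * a * (b - a)"
    using second_moment by (simp add: mean power2_eq_square algebra_simps)
  also have "\<dots> \<ge> 0" using a q by simp
  finally show "h \<le> b" using mean_pos by (simp add: zero_le_mult_iff)
qed

lemma sq_le_mean_times_rev_curve_second_moment_price:
  "((1 - q) * b)\<^sup>2 \<le> \<mu> * rev_curve a b q h"
proof -
  have "\<mu> * rev_curve a b q h = (1 - q) * (h * \<mu>)"
    using second_moment_price_bounds unfolding rev_curve_def by simp
  also have "\<dots> = ((1 - q) * b)\<^sup>2 + q * (1 - q) * a\<^sup>2"
    unfolding second_moment by (simp add: power2_eq_square algebra_simps)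
  finally show ?thesis using q by simp
qed

lemma max_le_rev_curve_half_mean_plus_second_moment_price:
  "max a ((1 - q) * b) \<le> 2 * rev_curve a b q (\<mu> / 2) + 2 * rev_curve a b q h"
proof -
  have rev_nonneg: "0 \<le> rev_curve a b q p" if "0 \<le> p" for p
    using that q unfolding rev_curve_def by simp
  have rev_half_mean: "0 \<le> rev_curve a b q (\<mu> / 2)"
    using rev_nonneg mean_pos by simp
  have rev_h: "0 \<le> rev_curve a b q h"
    using rev_nonneg second_moment_price_bounds(1) a(1) by simp
  have "0 \<le> q * a" using a q by simp
  then have "(1 - q) * b \<le> \<mu>" using mean by linarith
  show ?thesis
  proof (cases "\<mu> / 2 \<le> a")
    case True
    then have "rev_curve a b q (\<mu> / 2) = \<mu> / 2" unfolding rev_curve_def by simp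
    then show ?thesis
      using \<open>(1 - q) * b \<le> \<mu>\<close> a_less_mean rev_h by (intro max.boundedI) linarith+
  next
    case False
    define t where "t = (1 - q) * b"
    have "q * a \<le> a" using a q by (simp add: mult_left_le_one_le)
    then have "\<mu> / 2 < t" using False mean unfolding t_def by linarith
    then have "t * \<mu> \<le> t * (2 * t)" using mean_pos by (intro mult_left_mono) auto
    then have "t * \<mu> \<le> 2 * t\<^sup>2" by (simp add: power2_eq_square)
    also have "\<dots> \<le> 2 * (\<mu> * rev_curve a b q h)"
      using sq_le_mean_times_rev_curve_second_moment_price unfolding t_def by simp
    finally have "t * \<mu> \<le> (2 * rev_curve a b q h) * \<mu>" by (simp add: algebra_simps)
    then have "t \<le> 2 * rev_curve a b q h" using mean_pos by simp
    then show ?thesis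
      using False \<open>\<mu> / 2 < t\<close> rev_half_mean unfolding t_def by (intro max.boundedI) linarith+
  qed
qed

end

theorem proposition2:
  fixes \<mu> \<sigma> :: real and F :: "real pmf"
  assumes "\<mu> > 0" and "\<sigma> \<ge> 0"
    and "set_pmf F \<subseteq> {0..}"
    and "card (set_pmf F) = 2"
    and "measure_pmf.expectation F (\<lambda>x. x) = \<mu>"
    and "measure_pmf.variance F (\<lambda>x. x) = \<sigma>^2"
  shows "REV_mech (mechA \<mu> \<sigma>) F \<ge> OPT F / 4"
proof -
  obtain a b where "a < b" and F: "set_pmf F = {a, b}"
    using card_2_linorderE[OF assms(4)] .
  then have "a \<noteq> b" and "0 \<le> a" using assms(3) by auto
  define q where "q = pmf F a"
  have "0 < pmf F a" "0 < pmf F b" using F by (simp_all add: pmf_positive)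
  then have "0 < q" "q < 1" using pmf_two_point[OF F \<open>a \<noteq> b\<close>] unfolding q_def by simp_all
  have mean: "\<mu> = q * a + (1 - q) * b"
    using expectation_two_point[OF F \<open>a \<noteq> b\<close>] assms(5) unfolding q_def by simp
  have "(\<mu> + \<sigma>\<^sup>2 / \<mu>) * \<mu> = \<mu>\<^sup>2 + \<sigma>\<^sup>2"
    using assms(1) by (simp add: field_simps power2_eq_square)
  also have "\<dots> = q * a\<^sup>2 + (1 - q) * b\<^sup>2"
    using two_point_second_moment[OF F \<open>a \<noteq> b\<close>] assms(5,6) unfolding q_def by simp
  finally have second_moment: "(\<mu> + \<sigma>\<^sup>2 / \<mu>) * \<mu> = q * a\<^sup>2 + (1 - q) * b\<^sup>2" .
  have REV: "REV p F = rev_curve a b q p" for p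
    using REV_two_point[OF F \<open>a < b\<close>] unfolding q_def .
  have "OPT F \<le> max a ((1 - q) * b)"
    unfolding OPT_def REV using \<open>0 \<le> a\<close> \<open>q < 1\<close>
    by (intro cSUP_least rev_curve_le_max) auto
  also have "\<dots> \<le> 2 * REV (\<mu> / 2) F + 2 * REV (\<mu> + \<sigma>\<^sup>2 / \<mu>) F"
    unfolding REV using max_le_rev_curve_half_mean_plus_second_moment_price
      [OF \<open>0 \<le> a\<close> \<open>a < b\<close> \<open>0 < q\<close> \<open>q < 1\<close> mean second_moment] .
  also have "\<dots> = 4 * REV_mech (mechA \<mu> \<sigma>) F"
    unfolding REV_mech_def mechA_def by simp
  finally show ?thesis by simp
qed

end
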